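(* Let $n\ge1$, $k\ge2$, let $\nu$ be a distribution on $[k]$ with $\nu(i)>0$ for all $i$, and let $\Pi$ be a deterministic $k$-party protocol which solves unique set-disjointness under $\mathcal{D}_\nu$ with error at most $2\%$. Let $(W,X)$ be sampled as in the definition of $\mathcal{D}^0_\nu$ and define $$L=\frac1n\sum_{i\in[k]}\frac{1}{\nu(i)}\sum_{j\in[n]}I\big(X_i(j):\Pi(X)\,\big|\,W\big).$$ Then there is a $k$-party protocol $\Lambda$ for the $k$-bit AND function (player $i$ holds a bit $U_i$; the goal is to output $\prod_i U_i$), using public randomness $R$ and private randomness, such that: (1) on input $0^k$ and on input $1^k$, $\Lambda$ outputs the wrong value with probability at most $8\%$; and (2) $L=\sum_{i\in[k]} I\big(b:\Lambda(e_i[b],R)\,\big|\,R\big)$, where $b$ is a uniform bit independent of all randomness of $\Lambda$.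
   Context: Inputs are $X=(X_1,\ldots,X_k)\in(\{0,1\}^n)^k$, player $i$ holding $X_i$; $X^j=(X_1(j),\ldots,X_k(j))$, $|X^j|$ its Hamming weight; $\mathcal{F}_0=\{X:\forall j,|X^j|\le1\}$ and $\mathcal{F}_1=\{X:\exists j,|X^j|=k,\forall j'\neq j,|X^{j'}|\le1\}$, correct output $b$ on $\mathcal{F}_b$. Protocols are in the blackboard model; $\Pi(X)$ and $\Lambda(U,R)$ denote transcripts (whose output bit is determined by the transcript). $\mathcal{D}^0_\nu$: sample $W\in[k]^n$ with i.i.d. coordinates $\sim\nu$; for each $j$, if $W_j=i$ then $X_i(j)$ is a uniform bit and $X_{i'}(j)=0$ for $i'\ne i$. $\mathcal{D}^1_\nu$: sample $X\sim\mathcal{D}^0_\nu$ and uniform $j^*\in[n]$, set $X^{j^*}=1^k$. $\mathcal{D}_\nu$: uniform bit $b$, then $X\sim \mathcal{D}^b_\nu$; error is the probability the output differs from $b$. For $i\in[k]$ and a bit $b$, $e_i[b]\in\{0,1\}^k$ is the vector with $b$ in coordinate $i$ and $0$ elsewhere. *)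

theory Defs
  imports "HOL-Probability.Probability"
begin

text \<open>At an internal node
  Node i f t0 t1, player i writes the bit f applied to its local view
  (its input, possibly together with randomness) on the blackboard, and
  the protocol continues in t0 or t1 according to that bit.  A leaf carries
  the output bit, which is thus determined by the transcript.  Players are
  indexed by 0 ..< k.\<close>

datatype 'a proto = Leaf bool | Node nat "'a \<Rightarrow> bool" "'a proto" "'a proto"

fun speakers_ok :: "nat \<Rightarrow> 'a proto \<Rightarrow> bool" where
  "speakers_ok k (Leaf b) = True"
| "speakers_ok k (Node i f t0 t1) = (i < k \<and> speakers_ok k t0 \<and> speakers_ok k t1)"

fun transcript :: "'a proto \<Rightarrow> (nat \<Rightarrow> 'a) \<Rightarrow> bool list" where
  "transcript (Leaf b) v = []"
| "transcript (Node i f t0 t1) v =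
     (let c = f (v i) in c # transcript (if c then t1 else t0) v)"

fun pout :: "'a proto \<Rightarrow> (nat \<Rightarrow> 'a) \<Rightarrow> bool" where
  "pout (Leaf b) v = b"
| "pout (Node i f t0 t1) v = (if f (v i) then pout t1 v else pout t0 v)"

definition cond_mi :: "('a \<times> 'b \<times> 'c) pmf \<Rightarrow> real" where
  "cond_mi p =
     (\<Sum>(a,b,c)\<in>set_pmf p.
        pmf p (a,b,c) *
        log 2 (pmf p (a,b,c) * pmf (map_pmf (\<lambda>(x,y,z). z) p) c /
               (pmf (map_pmf (\<lambda>(x,y,z). (x,z)) p) (a,c) *
                pmf (map_pmf (\<lambda>(x,y,z). (y,z)) p) (b,c))))"

text \<open>Inputs: X i j is bit j of player i (players 0..<k, coordinates 0..<n);
  all other entries are False.  W j is in 0..<k for j < n.\<close>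

definition D0 :: "nat \<Rightarrow> nat \<Rightarrow> nat pmf \<Rightarrow> ((nat \<Rightarrow> nat) \<times> (nat \<Rightarrow> nat \<Rightarrow> bool)) pmf" where
  "D0 k n \<nu> = do {
     W \<leftarrow> Pi_pmf {..<n} 0 (\<lambda>_. \<nu>);
     B \<leftarrow> Pi_pmf {..<n} False (\<lambda>_. bernoulli_pmf (1/2));
     return_pmf (W, (\<lambda>i j. j < n \<and> W j = i \<and> B j))
   }"

definition D1 :: "nat \<Rightarrow> nat \<Rightarrow> nat pmf \<Rightarrow> (nat \<Rightarrow> nat \<Rightarrow> bool) pmf" where
  "D1 k n \<nu> = do {
     (W, X) \<leftarrow> D0 k n \<nu>;
     jstar \<leftarrow> pmf_of_set {..<n};
     return_pmf (\<lambda>i j. if j = jstar \<and> i < k then True else X i j)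
   }"

definition Dnu :: "nat \<Rightarrow> nat \<Rightarrow> nat pmf \<Rightarrow> (bool \<times> (nat \<Rightarrow> nat \<Rightarrow> bool)) pmf" where
  "Dnu k n \<nu> = do {
     b \<leftarrow> bernoulli_pmf (1/2);
     X \<leftarrow> (if b then D1 k n \<nu> else map_pmf snd (D0 k n \<nu>));
     return_pmf (b, X)
   }"

text \<open>Error of a deterministic protocol (player i's input is the row X i) under D_nu.\<close>
definition err_Dnu :: "nat \<Rightarrow> nat \<Rightarrow> nat pmf \<Rightarrow> (nat \<Rightarrow> bool) proto \<Rightarrow> real" where
  "err_Dnu k n \<nu> Pi_prot = measure_pmf.prob (Dnu k n \<nu>) {(b, X). pout Pi_prot X \<noteq> b}"

definition L_info :: "nat \<Rightarrow> nat \<Rightarrow> nat pmf \<Rightarrow> (nat \<Rightarrow> bool) proto \<Rightarrow> real" where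
  "L_info k n \<nu> Pi_prot =
     (1 / real n) * (\<Sum>i<k. (1 / pmf \<nu> i) *
        (\<Sum>j<n. cond_mi (map_pmf (\<lambda>(W, X). (X i j, transcript Pi_prot X, W)) (D0 k n \<nu>))))"

text \<open>Local view of player i in a randomized protocol for k-bit AND:
  (own input bit U i, public randomness R, own private randomness Rp i).
  Randomness values are encoded as natural numbers.\<close>

definition AND_view :: "(nat \<Rightarrow> bool) \<Rightarrow> nat \<Rightarrow> (nat \<Rightarrow> nat) \<Rightarrow> nat \<Rightarrow> bool \<times> nat \<times> nat" where
  "AND_view U R Rp = (\<lambda>i. (U i, R, Rp i))"

definition e_vec :: "nat \<Rightarrow> bool \<Rightarrow> nat \<Rightarrow> bool" where
  "e_vec i b = (\<lambda>i'. if i' = i then b else False)"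

definition rand_pmf :: "nat \<Rightarrow> nat pmf \<Rightarrow> (nat \<Rightarrow> nat pmf) \<Rightarrow> (nat \<times> (nat \<Rightarrow> nat)) pmf" where
  "rand_pmf k \<rho> \<sigma> = pair_pmf \<rho> (Pi_pmf {..<k} 0 \<sigma>)"

definition prob_out_true :: "nat \<Rightarrow> nat pmf \<Rightarrow> (nat \<Rightarrow> nat pmf) \<Rightarrow> (bool \<times> nat \<times> nat) proto
     \<Rightarrow> (nat \<Rightarrow> bool) \<Rightarrow> real" where
  "prob_out_true k \<rho> \<sigma> Lam U =
     measure_pmf.prob (rand_pmf k \<rho> \<sigma>) {(R, Rp). pout Lam (AND_view U R Rp)}"

definition AND_info :: "nat \<Rightarrow> nat pmf \<Rightarrow> (nat \<Rightarrow> nat pmf) \<Rightarrow> (bool \<times> nat \<times> nat) proto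
     \<Rightarrow> nat \<Rightarrow> real" where
  "AND_info k \<rho> \<sigma> Lam i =
     cond_mi (do {
       b \<leftarrow> bernoulli_pmf (1/2);
       (R, Rp) \<leftarrow> rand_pmf k \<rho> \<sigma>;
       return_pmf (b, transcript Lam (AND_view (e_vec i b) R Rp), R)
     })"

end

theory Submission
  imports Defs "HOL-Library.Countable"
begin

text \<open>The AND protocol embeds its input into a random disjointness instance and runs Pi on it.
Public coins choose a uniform coordinate j and owners W with i.i.d. entries distributed as nu;
player i writes its own bit into coordinate j and private uniform bits into the other coordinates
it owns.  On input 1...1 the embedded instance is distributed exactly as D1; on input 0...0 it is
the D0 instance conditioned on the event (of probability 1/2) that column j is zero.  The error
of Pi under D is the average of its errors under D0 and D1, so the latter are at most 4%, and
the errors of the AND protocol are at most 8% and 4%.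

For the information, condition on W: the bit X_i(j) is constant unless W_j = i, which has
probability nu(i), and given W_j = i the pair (X_i(j), Pi(X)) has the same law as
(b, Lambda(e_i[b], R)) given the public coins R = (j, W).  The weight 1/nu(i) in L cancels nu(i),
and the average over j in L is the public choice of the coordinate.\<close>

section \<open>Finite expectations and mutual information\<close>

lemma expectation_pmf_finite:
  assumes "finite (set_pmf M)"
  shows "measure_pmf.expectation M f = (\<Sum>x\<in>set_pmf M. pmf M x * f x)"
  by (subst integral_measure_pmf[OF assms]) auto

lemma expectation_pmf_cong:
  fixes f g :: "'a \<Rightarrow> real"
  assumes "\<And>x. x \<in> set_pmf M \<Longrightarrow> f x = g x"
  shows "measure_pmf.expectation M f = measure_pmf.expectation M g"
  by (rule integral_cong_AE) (auto intro: AE_pmfI assms)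

lemma prob_bind_pmf_finite:
  assumes "finite (set_pmf p)" "\<And>x. x \<in> set_pmf p \<Longrightarrow> finite (set_pmf (f x))"
  shows "measure_pmf.prob (bind_pmf p f) A = measure_pmf.expectation p (\<lambda>x. measure_pmf.prob (f x) A)"
proof -
  have "measure_pmf.prob (bind_pmf p f) A = measure_pmf.expectation (bind_pmf p f) (indicator A)"
    by simp
  also have "\<dots> = (\<Sum>a\<in>set_pmf p. pmf p a *\<^sub>R measure_pmf.expectation (f a) (indicator A))"
    by (rule pmf_expectation_bind) (use assms in auto)
  also have "\<dots> = measure_pmf.expectation p (\<lambda>x. measure_pmf.prob (f x) A)"
    using assms(1) by (simp add: expectation_pmf_finite)
  finally show ?thesis .
qed

lemma map_pair_pmf_eq_bind: "map_pmf f (pair_pmf A B) = bind_pmf A (\<lambda>a. map_pmf (\<lambda>b. f (a, b)) B)"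
  unfolding pair_pmf_def by (simp add: map_bind_pmf map_pmf_def[symmetric] pmf.map_comp o_def)

lemma expectation_pair_pmf_mult:
  fixes f :: "'a \<Rightarrow> real" and g :: "'b \<Rightarrow> real"
  assumes fp: "finite (set_pmf p)" and fq: "finite (set_pmf q)"
  shows "measure_pmf.expectation (pair_pmf p q) (\<lambda>x. f (fst x) * g (snd x))
       = measure_pmf.expectation p f * measure_pmf.expectation q g"
proof -
  have "measure_pmf.expectation (pair_pmf p q) (\<lambda>x. f (fst x) * g (snd x))
      = (\<Sum>x\<in>set_pmf p \<times> set_pmf q. pmf p (fst x) * pmf q (snd x) * (f (fst x) * g (snd x)))"
    using fp fq by (subst expectation_pmf_finite) (auto intro!: sum.cong simp: pmf_pair)
  also have "\<dots> = (\<Sum>a\<in>set_pmf p. \<Sum>b\<in>set_pmf q. (pmf p a * f a) * (pmf q b * g b))"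
    unfolding sum.cartesian_product by (intro sum.cong refl) (auto simp: algebra_simps)
  also have "\<dots> = (\<Sum>a\<in>set_pmf p. pmf p a * f a) * (\<Sum>b\<in>set_pmf q. pmf q b * g b)"
    by (rule sum_product[symmetric])
  finally show ?thesis using fp fq by (simp add: expectation_pmf_finite)
qed

lemma pmf_bind_tagged:
  "pmf (bind_pmf q (\<lambda>c. map_pmf (\<lambda>x. (x, c)) (M c))) (x, c) = pmf q c * pmf (M c) x"
proof -
  have "pmf (bind_pmf q (\<lambda>c. map_pmf (\<lambda>x. (x, c)) (M c))) (x, c)
      = (\<integral>c'. pmf (map_pmf (\<lambda>x. (x, c')) (M c')) (x, c) \<partial>q)"
    by (rule pmf_bind)
  also have "\<dots> = (\<integral>c'. indicator {c} c' * pmf (M c) x \<partial>q)"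
  proof (rule Bochner_Integration.integral_cong[OF refl])
    fix c'
    show "pmf (map_pmf (\<lambda>x. (x, c')) (M c')) (x, c) = indicator {c} c' * pmf (M c) x"
    proof (cases "c' = c")
      case True
      have "inj (\<lambda>x. (x, c))" by (auto simp: inj_on_def)
      then show ?thesis using True pmf_map_inj'[of "\<lambda>x. (x, c)" "M c" x] by simp
    next
      case False
      then show ?thesis by (auto simp: pmf_eq_0_set_pmf)
    qed
  qed
  also have "\<dots> = pmf q c * pmf (M c) x"
    by (simp add: measure_pmf_single)
  finally show ?thesis .
qed

definition mutual_info :: "('a \<times> 'b) pmf \<Rightarrow> real" where
  "mutual_info K = (\<Sum>(a, b)\<in>set_pmf K. pmf K (a, b) *
      log 2 (pmf K (a, b) / (pmf (map_pmf fst K) a * pmf (map_pmf snd K) b)))"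


lemma cond_mi_eq_average_mutual_info:
  fixes q :: "'c pmf" and K :: "'c \<Rightarrow> ('a \<times> 'b) pmf"
  assumes fq: "finite (set_pmf q)" and fK: "\<And>c. c \<in> set_pmf q \<Longrightarrow> finite (set_pmf (K c))"
  shows "cond_mi (bind_pmf q (\<lambda>c. map_pmf (\<lambda>(a, b). (a, b, c)) (K c)))
       = (\<Sum>c\<in>set_pmf q. pmf q c * mutual_info (K c))"
proof -
  define p where "p = bind_pmf q (\<lambda>c. map_pmf (\<lambda>(a,b). (a,b,c)) (K c))"
  have p_eq: "p = map_pmf (\<lambda>((a,b),c). (a,b,c)) (bind_pmf q (\<lambda>c. map_pmf (\<lambda>x. (x,c)) (K c)))"
    unfolding p_def by (simp add: map_bind_pmf pmf.map_comp o_def case_prod_unfold)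
  have injf: "inj (\<lambda>((a::'a,b::'b),c::'c). (a,b,c))" by (auto simp: inj_on_def)
  have pm: "pmf p (a,b,c) = pmf q c * pmf (K c) (a,b)" for a b c
    using pmf_map_inj'[OF injf, of _ "((a,b),c)"] p_eq pmf_bind_tagged[of q K "(a,b)" c] by simp
  have pC: "map_pmf (\<lambda>(x,y,z). z) p = q"
    unfolding p_def by (simp add: map_bind_pmf pmf.map_comp o_def case_prod_beta map_pmf_const bind_return_pmf')
  have pAC: "map_pmf (\<lambda>(x,y,z). (x,z)) p = bind_pmf q (\<lambda>c. map_pmf (\<lambda>x. (x,c)) (map_pmf fst (K c)))"
    unfolding p_def by (simp add: map_bind_pmf pmf.map_comp o_def case_prod_beta)
  have pBC: "map_pmf (\<lambda>(x,y,z). (y,z)) p = bind_pmf q (\<lambda>c. map_pmf (\<lambda>x. (x,c)) (map_pmf snd (K c)))"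
    unfolding p_def by (simp add: map_bind_pmf pmf.map_comp o_def case_prod_beta)
  have setp: "set_pmf p = (\<lambda>(c,(a,b)). (a,b,c)) ` (SIGMA c:set_pmf q. set_pmf (K c))"
    unfolding p_def by (auto simp: image_iff) force
  have inj2: "inj_on (\<lambda>(c,(a::'a,b::'b)). (a,b,c)) (SIGMA c:set_pmf q. set_pmf (K c))"
    by (auto simp: inj_on_def)
  have "cond_mi p = (\<Sum>(a,b,c)\<in>set_pmf p. pmf p (a,b,c) *
        log 2 (pmf p (a,b,c) * pmf q c /
               (pmf q c * pmf (map_pmf fst (K c)) a * (pmf q c * pmf (map_pmf snd (K c)) b))))"
    unfolding cond_mi_def pC pAC pBC pmf_bind_tagged by simp
  also have "\<dots> = (\<Sum>(c,(a,b))\<in>(SIGMA c:set_pmf q. set_pmf (K c)).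
        pmf q c * pmf (K c) (a,b) *
        log 2 (pmf q c * pmf (K c) (a,b) * pmf q c /
               (pmf q c * pmf (map_pmf fst (K c)) a * (pmf q c * pmf (map_pmf snd (K c)) b))))"
    unfolding setp by (subst sum.reindex[OF inj2], rule sum.cong[OF refl], clarsimp simp: pm)
  also have "\<dots> = (\<Sum>c\<in>set_pmf q. \<Sum>(a,b)\<in>set_pmf (K c).
        pmf q c * pmf (K c) (a,b) *
        log 2 (pmf q c * pmf (K c) (a,b) * pmf q c /
               (pmf q c * pmf (map_pmf fst (K c)) a * (pmf q c * pmf (map_pmf snd (K c)) b))))"
    by (subst sum.Sigma[symmetric]) (use fq fK in auto)
  also have "\<dots> = (\<Sum>c\<in>set_pmf q. pmf q c * mutual_info (K c))"
  proof -
    have cancel: "r * x * r / (r * y * (r * z)) = x / (y * z)" if "r \<noteq> 0" for r x y z :: real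
      using that by (simp add: field_simps)
    show ?thesis
      unfolding mutual_info_def sum_distrib_left
      by (intro sum.cong refl) (auto simp: cancel set_pmf_iff)
  qed
  finally show ?thesis unfolding p_def .
qed

lemma mutual_info_const_fst: "mutual_info (map_pmf (\<lambda>x. (c, t x)) P) = 0"
proof -
  let ?K = "map_pmf (\<lambda>x. (c, t x)) P"
  have K: "?K = map_pmf (Pair c) (map_pmf t P)" by (simp add: pmf.map_comp o_def)
  have f: "map_pmf fst ?K = return_pmf c" by (simp add: pmf.map_comp o_def map_pmf_const)
  have s: "map_pmf snd ?K = map_pmf t P" by (simp add: pmf.map_comp o_def)
  have inj: "inj (Pair c)" by (auto simp: inj_on_def)
  show ?thesis unfolding mutual_info_def
  proof (rule sum.neutral, clarify)
    fix a b assume ab: "(a, b) \<in> set_pmf ?K"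
    then have a: "a = c" by auto
    have "pmf ?K (a, b) = pmf (map_pmf t P) b" unfolding K a by (rule pmf_map_inj'[OF inj])
    then show "pmf ?K (a, b) * log 2 (pmf ?K (a, b) / (pmf (map_pmf fst ?K) a * pmf (map_pmf snd ?K) b)) = 0"
      using ab unfolding f s a by (simp add: set_pmf_iff)
  qed
qed

definition unif_bits :: "nat \<Rightarrow> (nat \<Rightarrow> bool) pmf" where
  "unif_bits n = Pi_pmf {..<n} False (\<lambda>_. bernoulli_pmf (1/2))"

definition unif_bits_except :: "nat \<Rightarrow> nat \<Rightarrow> (nat \<Rightarrow> bool) pmf" where
  "unif_bits_except n j = Pi_pmf ({..<n} - {j}) False (\<lambda>_. bernoulli_pmf (1/2))"

definition owners :: "nat \<Rightarrow> nat pmf \<Rightarrow> (nat \<Rightarrow> nat) pmf" where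
  "owners n \<nu> = Pi_pmf {..<n} 0 (\<lambda>_. \<nu>)"

lemma finite_set_unif_bits: "finite (set_pmf (unif_bits n))"
  unfolding unif_bits_def by (subst set_Pi_pmf) (auto intro!: finite_PiE_dflt)

lemma finite_set_unif_bits_except: "finite (set_pmf (unif_bits_except n j))"
  unfolding unif_bits_except_def by (subst set_Pi_pmf) (auto intro!: finite_PiE_dflt)

lemma unif_bits_split:
  assumes "j < n"
  shows "unif_bits n = map_pmf (\<lambda>(y, B). B(j := y)) (pair_pmf (bernoulli_pmf (1/2)) (unif_bits_except n j))"
proof -
  have n: "{..<n} = insert j ({..<n} - {j})" using assms by auto
  show ?thesis unfolding unif_bits_def unif_bits_except_def
    by (subst n, rule Pi_pmf_insert) auto
qed

lemma map_unif_bits_ignore: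
  assumes "j < n" and "\<And>y B. f (B(j := y)) = f B"
  shows "map_pmf f (unif_bits n) = map_pmf f (unif_bits_except n j)"
proof -
  have "map_pmf f (unif_bits n) = map_pmf (f \<circ> snd) (pair_pmf (bernoulli_pmf (1/2)) (unif_bits_except n j))"
    unfolding unif_bits_split[OF assms(1)] pmf.map_comp by (intro map_pmf_cong) (auto simp: assms(2))
  also have "\<dots> = map_pmf f (unif_bits_except n j)"
    by (simp add: pmf.map_comp[symmetric] map_snd_pair_pmf)
  finally show ?thesis .
qed

lemma owners_split:
  assumes "j < n"
  shows "owners n \<nu> = map_pmf (\<lambda>(y, W). W(j := y)) (pair_pmf \<nu> (Pi_pmf ({..<n} - {j}) 0 (\<lambda>_. \<nu>)))"
proof -
  have n: "{..<n} = insert j ({..<n} - {j})" using assms by auto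
  show ?thesis unfolding owners_def
    by (subst n, rule Pi_pmf_insert) auto
qed

text \<open>Selecting coordinate \<open>j\<close> from the \<open>g j\<close>-th of \<open>k\<close> independent uniform bit vectors yields
uniform bits again, because the selected coordinates are pairwise distinct.\<close>

lemma map_select_bits_Pi_pmf:
  fixes g :: "nat \<Rightarrow> nat" and k :: nat
  assumes g: "\<forall>j<n. g j < k"
  shows "map_pmf (\<lambda>F j. if j < n then F (g j) j else False) (Pi_pmf {..<k} d (\<lambda>_. unif_bits n))
       = unif_bits n"
proof (rule pmf_eqI)
  fix x :: "nat \<Rightarrow> bool"
  let ?f = "\<lambda>F j. if j < n then F (g j) j else False"
  let ?P = "Pi_pmf {..<k} d (\<lambda>_. unif_bits n)"
  show "pmf (map_pmf ?f ?P) x = pmf (unif_bits n) x"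
  proof (cases "\<exists>j. j \<notin> {..<n} \<and> x j \<noteq> False")
    case True
    then have "?f -` {x} = {}" by (auto simp: fun_eq_iff)
    then have "pmf (map_pmf ?f ?P) x = 0" by (simp add: pmf_map)
    moreover have "pmf (unif_bits n) x = 0"
      unfolding unif_bits_def using True by (intro pmf_Pi_outside) auto
    ultimately show ?thesis by simp
  next
    case False
    then have xo: "\<And>j. j \<ge> n \<Longrightarrow> x j = False" by (auto simp: not_less)
    have pre: "?f -` {x} = Pi {..<k} (\<lambda>i. Pi {..<n} (\<lambda>j. if g j = i then {x j} else UNIV))"
      using g xo by (auto simp: fun_eq_iff Pi_def split: if_splits) (metis not_le)+
    have "pmf (map_pmf ?f ?P) x = measure_pmf.prob ?P (?f -` {x})" by (simp add: pmf_map)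
    also have "\<dots> = (\<Prod>i<k. measure_pmf.prob (unif_bits n) (Pi {..<n} (\<lambda>j. if g j = i then {x j} else UNIV)))"
      unfolding pre by (rule measure_Pi_pmf_Pi) simp
    also have "\<dots> = (\<Prod>i<k. \<Prod>j<n. (if g j = i then 1/2 else 1))"
      unfolding unif_bits_def
      by (subst measure_Pi_pmf_Pi, simp) (auto intro!: prod.cong simp: measure_pmf_single)
    also have "\<dots> = (\<Prod>j<n. \<Prod>i<k. (if g j = i then 1/2 else 1))"
      by (rule prod.swap)
    also have "\<dots> = (\<Prod>j<n. (1/2::real))"
      using g by (intro prod.cong refl) (simp add: prod.delta)
    also have "\<dots> = pmf (unif_bits n) x"
      unfolding unif_bits_def using xo by (subst pmf_Pi') (auto simp: not_less)
    finally show ?thesis .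
  qed
qed

section \<open>Simulating a disjointness protocol on an AND input\<close>

lemma pout_cong_players:
  "speakers_ok k t \<Longrightarrow> (\<And>i. i < k \<Longrightarrow> v i = v' i) \<Longrightarrow> pout t v = pout t v'"
  by (induction t) auto

definition embed_input ::
    "nat \<Rightarrow> nat \<Rightarrow> (nat \<Rightarrow> nat) \<Rightarrow> (nat \<Rightarrow> bool) \<Rightarrow> (nat \<Rightarrow> bool) \<Rightarrow> nat \<Rightarrow> nat \<Rightarrow> bool" where
  "embed_input n j g u B = (\<lambda>i j'. if j' = j then u i else (j' < n \<and> g j' = i \<and> B j'))"

lemma embed_input_update_owner: "embed_input n j (g(j := y)) u B = embed_input n j g u B"
  by (auto simp: embed_input_def fun_eq_iff)

lemma embed_input_update_bits: "embed_input n j g u (B(j := y)) = embed_input n j g u B"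
  by (auto simp: embed_input_def fun_eq_iff)

text \<open>Randomness of an AND protocol is a natural number: the public coins encode the coordinate and
the owners, the private coins of a player its bit vector, via the countable-type encoding.\<close>

definition enc_public :: "nat \<Rightarrow> nat \<Rightarrow> (nat \<Rightarrow> nat) \<Rightarrow> nat" where
  "enc_public n j W = to_nat (j, map W [0..<n])"

definition enc_private :: "nat \<Rightarrow> (nat \<Rightarrow> bool) \<Rightarrow> nat" where
  "enc_private n B = to_nat (map B [0..<n])"

definition decode_row :: "nat \<Rightarrow> nat \<Rightarrow> bool \<times> nat \<times> nat \<Rightarrow> nat \<Rightarrow> bool" where
  "decode_row n i v = (case v of (u, r, rp) \<Rightarrow> (\<lambda>j'.
     case (from_nat r :: nat \<times> nat list) of (j, W) \<Rightarrow>
       if j' = j then u else (j' < n \<and> W ! j' = i \<and> (from_nat rp :: bool list) ! j')))"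

definition public_coins :: "nat \<Rightarrow> nat pmf \<Rightarrow> nat pmf" where
  "public_coins n \<nu> = map_pmf (\<lambda>(j, W). enc_public n j W) (pair_pmf (pmf_of_set {..<n}) (owners n \<nu>))"

definition private_coins :: "nat \<Rightarrow> nat \<Rightarrow> nat pmf" where
  "private_coins n = (\<lambda>_. map_pmf (enc_private n) (unif_bits n))"

fun simulate :: "nat \<Rightarrow> (nat \<Rightarrow> bool) proto \<Rightarrow> (bool \<times> nat \<times> nat) proto" where
  "simulate n (Leaf b) = Leaf b"
| "simulate n (Node i f t0 t1) = Node i (\<lambda>v. f (decode_row n i v)) (simulate n t0) (simulate n t1)"

lemma transcript_simulate: "transcript (simulate n t) v = transcript t (\<lambda>i. decode_row n i (v i))"
  by (induction t) (auto simp: Let_def)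

lemma pout_simulate: "pout (simulate n t) v = pout t (\<lambda>i. decode_row n i (v i))"
  by (induction t) auto

lemma speakers_ok_simulate: "speakers_ok k (simulate n t) = speakers_ok k t"
  by (induction t) auto

lemma finite_set_private_coins: "finite (set_pmf (Pi_pmf {..<k} 0 (private_coins n)))"
  unfolding private_coins_def
  by (subst set_Pi_pmf) (auto intro!: finite_PiE_dflt simp: finite_set_unif_bits)

lemma Pi_pmf_private_coins:
  "Pi_pmf {..<k} 0 (private_coins n)
   = map_pmf (\<lambda>F i. if i < k then enc_private n (F i) else 0) (Pi_pmf {..<k} (\<lambda>_. False) (\<lambda>_. unif_bits n))"
proof -
  have "Pi_pmf {..<k} 0 (private_coins n)
      = map_pmf (\<lambda>f i. if i \<in> {..<k} then f i else 0) (Pi_pmf {..<k} (enc_private n (\<lambda>_. False)) (private_coins n))"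
    by (rule Pi_pmf_default_swap[symmetric]) simp
  also have "Pi_pmf {..<k} (enc_private n (\<lambda>_. False)) (private_coins n)
      = map_pmf (\<lambda>F. enc_private n \<circ> F) (Pi_pmf {..<k} (\<lambda>_. False) (\<lambda>_. unif_bits n))"
    unfolding private_coins_def by (rule Pi_pmf_map) auto
  finally show ?thesis by (simp add: pmf.map_comp o_def)
qed

lemma decode_rows_enc:
  assumes "\<forall>j'<n. W j' < k"
  shows "(\<lambda>i. decode_row n i (U i, enc_public n j W, if i < k then enc_private n (F i) else 0))
       = embed_input n j W U (\<lambda>j'. if j' < n then F (W j') j' else False)"
  using assms by (auto simp: fun_eq_iff decode_row_def enc_public_def enc_private_def embed_input_def)

lemma decoded_rows_dist:
  assumes W: "\<forall>j'<n. W j' < k"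
  shows "map_pmf (\<lambda>Rp i. decode_row n i (U i, enc_public n j W, Rp i)) (Pi_pmf {..<k} 0 (private_coins n))
       = map_pmf (embed_input n j W U) (unif_bits n)"
proof -
  have "map_pmf (\<lambda>Rp i. decode_row n i (U i, enc_public n j W, Rp i)) (Pi_pmf {..<k} 0 (private_coins n))
     = map_pmf (embed_input n j W U) (map_pmf (\<lambda>F j'. if j' < n then F (W j') j' else False)
         (Pi_pmf {..<k} (\<lambda>_. False) (\<lambda>_. unif_bits n)))"
    unfolding Pi_pmf_private_coins pmf.map_comp o_def using decode_rows_enc[OF W] by simp
  then show ?thesis
    unfolding map_select_bits_Pi_pmf[OF W] .
qed

lemma AND_transcript_pmf_eq_bind:
  "bind_pmf (bernoulli_pmf (1/2)) (\<lambda>b. bind_pmf (rand_pmf k \<rho> \<sigma>) (\<lambda>(R, Rp). return_pmf (b, T b R Rp, R)))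
   = bind_pmf \<rho> (\<lambda>R. map_pmf (\<lambda>(a, b). (a, b, R))
        (bind_pmf (bernoulli_pmf (1/2)) (\<lambda>b. map_pmf (\<lambda>Rp. (b, T b R Rp)) (Pi_pmf {..<k} 0 \<sigma>))))"
  unfolding rand_pmf_def pair_pmf_def
  by (simp add: bind_assoc_pmf bind_return_pmf map_bind_pmf map_pmf_def
      bind_commute_pmf[of "bernoulli_pmf (1/2)"])

definition D0_input :: "nat \<Rightarrow> (nat \<Rightarrow> nat) \<Rightarrow> (nat \<Rightarrow> bool) \<Rightarrow> nat \<Rightarrow> nat \<Rightarrow> bool" where
  "D0_input n W B = (\<lambda>i j. j < n \<and> W j = i \<and> B j)"

definition D1_input ::
    "nat \<Rightarrow> nat \<Rightarrow> nat \<Rightarrow> (nat \<Rightarrow> nat) \<Rightarrow> (nat \<Rightarrow> bool) \<Rightarrow> nat \<Rightarrow> nat \<Rightarrow> bool" where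
  "D1_input k n j W B = (\<lambda>i j'. if j' = j \<and> i < k then True else D0_input n W B i j')"

definition coord_transcript ::
    "nat \<Rightarrow> (nat \<Rightarrow> bool) proto \<Rightarrow> nat \<Rightarrow> nat \<Rightarrow> (nat \<Rightarrow> nat) \<Rightarrow> (bool \<times> bool list) pmf" where
  "coord_transcript n P i j W = map_pmf (\<lambda>(b, B). (b, transcript P (embed_input n j W (e_vec i b) B)))
      (pair_pmf (bernoulli_pmf (1/2)) (unif_bits_except n j))"

lemma coord_transcript_update_owner: "coord_transcript n P i j (W(j := y)) = coord_transcript n P i j W"
  unfolding coord_transcript_def embed_input_update_owner ..

lemma coord_transcript_D0_owner:
  assumes "j < n" "W j = i"
  shows "map_pmf (\<lambda>B. (D0_input n W B i j, transcript P (D0_input n W B))) (unif_bits n)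
       = coord_transcript n P i j W"
proof -
  have as_embedding: "D0_input n W (B(j := y)) = embed_input n j W (e_vec i y) B" for y B
    using assms by (auto simp: fun_eq_iff D0_input_def embed_input_def e_vec_def)
  have coord: "D0_input n W (B(j := y)) i j = y" for y B
    using assms by (simp add: D0_input_def)
  show ?thesis unfolding unif_bits_split[OF assms(1)] coord_transcript_def pmf.map_comp
    by (intro map_pmf_cong refl) (auto simp: as_embedding coord embed_input_def e_vec_def simp del: fun_upd_apply)
qed

lemma mutual_info_D0_not_owner:
  assumes "W j \<noteq> i"
  shows "mutual_info (map_pmf (\<lambda>B. (D0_input n W B i j, transcript P (D0_input n W B))) (unif_bits n)) = 0"
  using assms mutual_info_const_fst[of False "\<lambda>B. transcript P (D0_input n W B)"]
  by (simp add: D0_input_def)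

lemma prob_embed_unif_bits_except:
  assumes "j < n"
  shows "measure_pmf.prob (unif_bits n) {B. Q (embed_input n j W u B)}
       = measure_pmf.prob (unif_bits_except n j) {B. Q (embed_input n j W u B)}"
proof -
  have "map_pmf (embed_input n j W u) (unif_bits n) = map_pmf (embed_input n j W u) (unif_bits_except n j)"
    by (rule map_unif_bits_ignore[OF assms]) (simp add: embed_input_update_bits)
  then show ?thesis
    by (metis (no_types) measure_map_pmf vimage_Collect_eq)
qed

text \<open>With column j zeroed, the embedding is the D0 input conditioned on the event B j = False of
probability 1/2.\<close>

lemma prob_embed_zero_le:
  assumes j: "j < n"
  shows "measure_pmf.prob (unif_bits n) {B. Q (embed_input n j W (\<lambda>_. False) B)}
       \<le> 2 * measure_pmf.prob (unif_bits n) {B. Q (D0_input n W B)}"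
proof -
  let ?p = "\<lambda>y. measure_pmf.prob (unif_bits_except n j) {B. Q (D0_input n W (B(j := y)))}"
  have upd: "D0_input n W (B(j := y)) = embed_input n j W (\<lambda>i. W j = i \<and> y) B" for B y
    using j by (auto simp: fun_eq_iff D0_input_def embed_input_def)
  have "measure_pmf.prob (unif_bits n) {B. Q (D0_input n W B)}
      = measure_pmf.prob (bind_pmf (bernoulli_pmf (1/2)) (\<lambda>y. map_pmf (\<lambda>B. B(j := y)) (unif_bits_except n j)))
          {B. Q (D0_input n W B)}"
    unfolding unif_bits_split[OF j] map_pair_pmf_eq_bind by simp
  also have "\<dots> = measure_pmf.expectation (bernoulli_pmf (1/2)) ?p"
    by (subst prob_bind_pmf_finite) (auto simp: finite_set_unif_bits_except measure_map_pmf vimage_def)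
  also have "\<dots> = ?p True / 2 + ?p False / 2"
    by simp
  finally have "measure_pmf.prob (unif_bits n) {B. Q (D0_input n W B)} \<ge> ?p False / 2"
    by simp
  moreover have "?p False = measure_pmf.prob (unif_bits n) {B. Q (embed_input n j W (\<lambda>_. False) B)}"
    unfolding upd prob_embed_unif_bits_except[OF j] by simp
  ultimately show ?thesis by simp
qed

context
  fixes n k :: nat and \<nu> :: "nat pmf"
  assumes set_\<nu>: "set_pmf \<nu> \<subseteq> {..<k}"
begin

lemma finite_set_owners: "finite (set_pmf (owners n \<nu>))"
  unfolding owners_def using set_\<nu>
  by (subst set_Pi_pmf) (auto intro!: finite_PiE_dflt intro: finite_subset)

lemma owners_range: "W \<in> set_pmf (owners n \<nu>) \<Longrightarrow> \<forall>j<n. W j < k"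
  unfolding owners_def using set_\<nu> by (subst (asm) set_Pi_pmf) (auto simp: PiE_dflt_def)

lemma expectation_owners_indicator:
  assumes j: "j < n" and h: "\<And>W y. h (W(j := y)) = h W"
  shows "measure_pmf.expectation (owners n \<nu>) (\<lambda>W. if W j = i then h W else 0)
       = pmf \<nu> i * measure_pmf.expectation (owners n \<nu>) h"
proof -
  let ?Q = "Pi_pmf ({..<n} - {j}) 0 (\<lambda>_. \<nu>)"
  have finQ: "finite (set_pmf ?Q)"
    using set_\<nu> by (subst set_Pi_pmf) (auto intro!: finite_PiE_dflt intro: finite_subset)
  have fin\<nu>: "finite (set_pmf \<nu>)" using set_\<nu> finite_subset by blast
  have "measure_pmf.expectation (owners n \<nu>) (\<lambda>W. if W j = i then h W else 0)
      = measure_pmf.expectation (pair_pmf \<nu> ?Q) (\<lambda>x. indicator {i} (fst x) * h (snd x))"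
    unfolding owners_split[OF j] integral_map_pmf
    by (intro Bochner_Integration.integral_cong refl) (auto simp: h split: prod.splits)
  also have "\<dots> = pmf \<nu> i * measure_pmf.expectation ?Q h"
    by (simp add: expectation_pair_pmf_mult[OF fin\<nu> finQ] measure_pmf_single)
  also have "measure_pmf.expectation ?Q h = measure_pmf.expectation (owners n \<nu>) h"
    unfolding owners_split[OF j] integral_map_pmf by (simp add: case_prod_beta h)
  finally show ?thesis .
qed

lemma finite_set_D0: "finite (set_pmf (D0 k n \<nu>))"
  using finite_set_owners finite_set_unif_bits unfolding D0_def owners_def unif_bits_def by auto

lemma finite_set_D1: "n \<ge> 1 \<Longrightarrow> finite (set_pmf (D1 k n \<nu>))"
  using finite_set_D0 unfolding D1_def by (auto simp: lessThan_empty_iff)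

lemma expectation_uniform_coordinate:
  assumes "n \<ge> 1"
  shows "measure_pmf.expectation (pair_pmf (pmf_of_set {..<n}) (owners n \<nu>)) (\<lambda>x. g (fst x) (snd x))
       = (\<Sum>j<n. measure_pmf.expectation (owners n \<nu>) (g j)) / n"
proof -
  have ne: "{..<n} \<noteq> {}" using assms by (auto simp: lessThan_empty_iff)
  have "pair_pmf (pmf_of_set {..<n}) (owners n \<nu>) = bind_pmf (pmf_of_set {..<n}) (\<lambda>j. map_pmf (Pair j) (owners n \<nu>))"
    by (simp add: map_pair_pmf_eq_bind[of "\<lambda>x. x", simplified])
  then show ?thesis
    by (simp, subst pmf_expectation_bind_pmf_of_set)
       (auto simp: ne finite_set_owners field_simps integral_map_pmf sum_divide_distrib)
qed

lemma finite_set_public_coins: "n \<ge> 1 \<Longrightarrow> finite (set_pmf (public_coins n \<nu>))"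
  unfolding public_coins_def using finite_set_owners by (auto simp: lessThan_empty_iff)

lemma expectation_public_coins:
  assumes "n \<ge> 1"
  shows "measure_pmf.expectation (public_coins n \<nu>) h
       = (\<Sum>j<n. measure_pmf.expectation (owners n \<nu>) (\<lambda>W. h (enc_public n j W))) / n"
  unfolding public_coins_def integral_map_pmf case_prod_beta
  by (rule expectation_uniform_coordinate[OF assms])

section \<open>Error and information of the simulation\<close>

lemma prob_simulate_given_public:
  assumes "W \<in> set_pmf (owners n \<nu>)"
  shows "measure_pmf.prob (Pi_pmf {..<k} 0 (private_coins n))
           {Rp. pout (simulate n P) (AND_view U (enc_public n j W) Rp)}
       = measure_pmf.prob (unif_bits n) {B. pout P (embed_input n j W U B)}"
proof -
  have "measure_pmf.prob (Pi_pmf {..<k} 0 (private_coins n)) {Rp. pout (simulate n P) (AND_view U (enc_public n j W) Rp)}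
      = measure_pmf.prob (map_pmf (\<lambda>Rp i. decode_row n i (U i, enc_public n j W, Rp i))
          (Pi_pmf {..<k} 0 (private_coins n))) {X. pout P X}"
    by (simp add: measure_map_pmf vimage_def pout_simulate AND_view_def)
  also have "\<dots> = measure_pmf.prob (map_pmf (embed_input n j W U) (unif_bits n)) {X. pout P X}"
    unfolding decoded_rows_dist[OF owners_range[OF assms]] ..
  finally show ?thesis by (simp add: measure_map_pmf vimage_def)
qed

lemma prob_out_true_simulate:
  assumes n: "n \<ge> 1"
  shows "prob_out_true k (public_coins n \<nu>) (private_coins n) (simulate n P) U
       = (\<Sum>j<n. measure_pmf.expectation (owners n \<nu>)
            (\<lambda>W. measure_pmf.prob (unif_bits n) {B. pout P (embed_input n j W U B)})) / n"
proof -
  let ?S = "Pi_pmf {..<k} 0 (private_coins n)"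
  have "prob_out_true k (public_coins n \<nu>) (private_coins n) (simulate n P) U
      = measure_pmf.prob (bind_pmf (public_coins n \<nu>) (\<lambda>R. map_pmf (Pair R) ?S))
          {(R, Rp). pout (simulate n P) (AND_view U R Rp)}"
    unfolding prob_out_true_def rand_pmf_def by (simp add: map_pair_pmf_eq_bind[of "\<lambda>x. x", simplified])
  also have "\<dots> = measure_pmf.expectation (public_coins n \<nu>)
                    (\<lambda>R. measure_pmf.prob ?S {Rp. pout (simulate n P) (AND_view U R Rp)})"
    by (subst prob_bind_pmf_finite)
       (auto simp: finite_set_public_coins[OF n] finite_set_private_coins measure_map_pmf vimage_def)
  also have "\<dots> = (\<Sum>j<n. measure_pmf.expectation (owners n \<nu>)
                    (\<lambda>W. measure_pmf.prob (unif_bits n) {B. pout P (embed_input n j W U B)})) / n"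
    unfolding expectation_public_coins[OF n]
    by (intro arg_cong2[where f = "(/)"] sum.cong refl expectation_pmf_cong prob_simulate_given_public)
  finally show ?thesis .
qed

lemma AND_transcript_given_public:
  assumes j: "j < n" and W: "W \<in> set_pmf (owners n \<nu>)"
  shows "bind_pmf (bernoulli_pmf (1/2)) (\<lambda>b. map_pmf
            (\<lambda>Rp. (b, transcript (simulate n P) (AND_view (e_vec i b) (enc_public n j W) Rp)))
            (Pi_pmf {..<k} 0 (private_coins n)))
       = coord_transcript n P i j W"
proof -
  have "map_pmf (\<lambda>Rp. (b, transcript (simulate n P) (AND_view (e_vec i b) (enc_public n j W) Rp)))
          (Pi_pmf {..<k} 0 (private_coins n))
      = map_pmf (\<lambda>X. (b, transcript P X)) (map_pmf (\<lambda>Rp i'. decode_row n i' (e_vec i b i', enc_public n j W, Rp i'))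
          (Pi_pmf {..<k} 0 (private_coins n)))" for b
    by (simp add: pmf.map_comp o_def transcript_simulate AND_view_def)
  also have "\<dots> b = map_pmf (\<lambda>B. (b, transcript P (embed_input n j W (e_vec i b) B))) (unif_bits n)" for b
    unfolding decoded_rows_dist[OF owners_range[OF W]] by (simp add: pmf.map_comp o_def)
  also have "\<dots> b = map_pmf (\<lambda>B. (b, transcript P (embed_input n j W (e_vec i b) B))) (unif_bits_except n j)" for b
    by (rule map_unif_bits_ignore[OF j]) (simp add: embed_input_update_bits)
  finally show ?thesis unfolding coord_transcript_def map_pair_pmf_eq_bind by simp
qed

lemma AND_info_simulate:
  assumes n: "n \<ge> 1"
  shows "AND_info k (public_coins n \<nu>) (private_coins n) (simulate n P) i
       = (\<Sum>j<n. measure_pmf.expectation (owners n \<nu>) (\<lambda>W. mutual_info (coord_transcript n P i j W))) / n"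
proof -
  let ?M = "\<lambda>R. bind_pmf (bernoulli_pmf (1/2)) (\<lambda>b. map_pmf
              (\<lambda>Rp. (b, transcript (simulate n P) (AND_view (e_vec i b) R Rp))) (Pi_pmf {..<k} 0 (private_coins n)))"
  have "AND_info k (public_coins n \<nu>) (private_coins n) (simulate n P) i
      = (\<Sum>R\<in>set_pmf (public_coins n \<nu>). pmf (public_coins n \<nu>) R * mutual_info (?M R))"
    unfolding AND_info_def AND_transcript_pmf_eq_bind
    by (rule cond_mi_eq_average_mutual_info) (use finite_set_public_coins[OF n] finite_set_private_coins in auto)
  also have "\<dots> = measure_pmf.expectation (public_coins n \<nu>) (\<lambda>R. mutual_info (?M R))"
    by (simp add: expectation_pmf_finite finite_set_public_coins[OF n])
  also have "\<dots> = (\<Sum>j<n. measure_pmf.expectation (owners n \<nu>) (\<lambda>W. mutual_info (coord_transcript n P i j W))) / n"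
    unfolding expectation_public_coins[OF n]
    by (intro arg_cong2[where f = "(/)"] sum.cong refl expectation_pmf_cong)
       (simp add: AND_transcript_given_public)
  finally show ?thesis .
qed

lemma cond_mi_D0_coordinate:
  assumes j: "j < n"
  shows "cond_mi (map_pmf (\<lambda>(W, X). (X i j, transcript P X, W)) (D0 k n \<nu>))
       = pmf \<nu> i * measure_pmf.expectation (owners n \<nu>) (\<lambda>W. mutual_info (coord_transcript n P i j W))"
proof -
  let ?K = "\<lambda>W. map_pmf (\<lambda>B. (D0_input n W B i j, transcript P (D0_input n W B))) (unif_bits n)"
  let ?h = "\<lambda>W. mutual_info (coord_transcript n P i j W)"
  have "map_pmf (\<lambda>(W, X). (X i j, transcript P X, W)) (D0 k n \<nu>)
      = bind_pmf (owners n \<nu>) (\<lambda>W. map_pmf (\<lambda>(a, b). (a, b, W)) (?K W))"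
    unfolding D0_def owners_def unif_bits_def D0_input_def
    by (simp add: map_bind_pmf pmf.map_comp o_def map_pmf_def[symmetric])
  then have "cond_mi (map_pmf (\<lambda>(W, X). (X i j, transcript P X, W)) (D0 k n \<nu>))
      = (\<Sum>W\<in>set_pmf (owners n \<nu>). pmf (owners n \<nu>) W * mutual_info (?K W))"
    by (simp add: cond_mi_eq_average_mutual_info finite_set_owners finite_set_unif_bits)
  also have "\<dots> = (\<Sum>W\<in>set_pmf (owners n \<nu>). pmf (owners n \<nu>) W * (if W j = i then ?h W else 0))"
    by (intro sum.cong refl) (auto simp: coord_transcript_D0_owner[OF j] mutual_info_D0_not_owner)
  also have "\<dots> = measure_pmf.expectation (owners n \<nu>) (\<lambda>W. if W j = i then ?h W else 0)"
    by (simp add: expectation_pmf_finite finite_set_owners)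
  also have "\<dots> = pmf \<nu> i * measure_pmf.expectation (owners n \<nu>) ?h"
    by (rule expectation_owners_indicator[OF j]) (simp add: coord_transcript_update_owner)
  finally show ?thesis .
qed

lemma prob_accept_D0:
  "measure_pmf.prob (map_pmf snd (D0 k n \<nu>)) {X. pout P X}
   = measure_pmf.expectation (owners n \<nu>) (\<lambda>W. measure_pmf.prob (unif_bits n) {B. pout P (D0_input n W B)})"
proof -
  have "map_pmf snd (D0 k n \<nu>) = bind_pmf (owners n \<nu>) (\<lambda>W. map_pmf (D0_input n W) (unif_bits n))"
    unfolding D0_def owners_def unif_bits_def D0_input_def
    by (simp add: map_bind_pmf map_pmf_def[symmetric] pmf.map_comp o_def)
  then show ?thesis
    by (simp, subst prob_bind_pmf_finite)
       (auto simp: finite_set_owners finite_set_unif_bits measure_map_pmf vimage_def)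
qed

lemma D1_eq_bind:
  "D1 k n \<nu> = bind_pmf (pair_pmf (pmf_of_set {..<n}) (owners n \<nu>))
                 (\<lambda>x. map_pmf (D1_input k n (fst x) (snd x)) (unif_bits n))"
proof -
  have "D1 k n \<nu> = bind_pmf (owners n \<nu>) (\<lambda>W. bind_pmf (unif_bits n) (\<lambda>B.
          bind_pmf (pmf_of_set {..<n}) (\<lambda>j. return_pmf (D1_input k n j W B))))"
    unfolding D1_def D0_def owners_def unif_bits_def D1_input_def D0_input_def
    by (simp add: bind_assoc_pmf bind_return_pmf)
  also have "\<dots> = bind_pmf (pmf_of_set {..<n}) (\<lambda>j. bind_pmf (owners n \<nu>) (\<lambda>W.
          bind_pmf (unif_bits n) (\<lambda>B. return_pmf (D1_input k n j W B))))"
    by (subst bind_commute_pmf[of "unif_bits n"], rule bind_commute_pmf)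
  also have "\<dots> = bind_pmf (pair_pmf (pmf_of_set {..<n}) (owners n \<nu>))
                   (\<lambda>x. map_pmf (D1_input k n (fst x) (snd x)) (unif_bits n))"
    by (simp add: map_pair_pmf_eq_bind[of "\<lambda>x. x", simplified] bind_map_pmf map_pmf_def
        bind_assoc_pmf bind_return_pmf)
  finally show ?thesis .
qed

lemma prob_accept_D1:
  assumes n: "n \<ge> 1" and speakers: "speakers_ok k P"
  shows "measure_pmf.prob (D1 k n \<nu>) {X. pout P X}
       = (\<Sum>j<n. measure_pmf.expectation (owners n \<nu>)
            (\<lambda>W. measure_pmf.prob (unif_bits n) {B. pout P (embed_input n j W (\<lambda>_. True) B)})) / n"
proof -
  have ne: "{..<n} \<noteq> {}" using n by (auto simp: lessThan_empty_iff)
  have players: "pout P (D1_input k n j W B) = pout P (embed_input n j W (\<lambda>_. True) B)" for j W B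
    by (rule pout_cong_players[OF speakers]) (auto simp: D1_input_def embed_input_def D0_input_def)
  have "measure_pmf.prob (D1 k n \<nu>) {X. pout P X}
      = measure_pmf.expectation (pair_pmf (pmf_of_set {..<n}) (owners n \<nu>))
          (\<lambda>x. measure_pmf.prob (unif_bits n) {B. pout P (embed_input n (fst x) (snd x) (\<lambda>_. True) B)})"
    unfolding D1_eq_bind
    by (subst prob_bind_pmf_finite)
       (auto simp: ne finite_set_owners finite_set_unif_bits measure_map_pmf vimage_def players)
  also have "\<dots> = (\<Sum>j<n. measure_pmf.expectation (owners n \<nu>)
            (\<lambda>W. measure_pmf.prob (unif_bits n) {B. pout P (embed_input n j W (\<lambda>_. True) B)})) / n"
    by (rule expectation_uniform_coordinate[OF n])
  finally show ?thesis .
qed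

lemma err_Dnu_eq:
  assumes n: "n \<ge> 1"
  shows "err_Dnu k n \<nu> P = (1 - measure_pmf.prob (D1 k n \<nu>) {X. pout P X}) / 2
        + measure_pmf.prob (map_pmf snd (D0 k n \<nu>)) {X. pout P X} / 2"
proof -
  have "err_Dnu k n \<nu> P = measure_pmf.expectation (bernoulli_pmf (1/2))
     (\<lambda>b. measure_pmf.prob (bind_pmf (if b then D1 k n \<nu> else map_pmf snd (D0 k n \<nu>))
            (\<lambda>X. return_pmf (b, X))) {(b, X). pout P X \<noteq> b})"
    unfolding err_Dnu_def Dnu_def
    by (subst prob_bind_pmf_finite) (auto simp: finite_set_D0 finite_set_D1[OF n] set_bind_pmf)
  also have "\<dots> = measure_pmf.prob (D1 k n \<nu>) {X. \<not> pout P X} / 2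
        + measure_pmf.prob (map_pmf snd (D0 k n \<nu>)) {X. pout P X} / 2"
    by (simp add: bind_return_pmf' map_pmf_def[symmetric] measure_map_pmf vimage_def)
  also have "{X. \<not> pout P X} = space (measure_pmf (D1 k n \<nu>)) - {X. pout P X}"
    by auto
  also have "measure_pmf.prob (D1 k n \<nu>) \<dots> = 1 - measure_pmf.prob (D1 k n \<nu>) {X. pout P X}"
    by (rule measure_pmf.prob_compl) simp
  finally show ?thesis .
qed

lemma prob_out_true_simulate_zeros:
  assumes n: "n \<ge> 1"
  shows "prob_out_true k (public_coins n \<nu>) (private_coins n) (simulate n P) (\<lambda>_. False)
       \<le> 2 * measure_pmf.prob (map_pmf snd (D0 k n \<nu>)) {X. pout P X}"
proof -
  have each: "measure_pmf.expectation (owners n \<nu>)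
                (\<lambda>W. measure_pmf.prob (unif_bits n) {B. pout P (embed_input n j W (\<lambda>_. False) B)})
            \<le> 2 * measure_pmf.prob (map_pmf snd (D0 k n \<nu>)) {X. pout P X}" if "j < n" for j
    unfolding prob_accept_D0 integral_mult_right_zero[symmetric]
    by (intro integral_mono integrable_measure_pmf_finite finite_set_owners prob_embed_zero_le that)
  have "prob_out_true k (public_coins n \<nu>) (private_coins n) (simulate n P) (\<lambda>_. False)
      \<le> (\<Sum>j<n. 2 * measure_pmf.prob (map_pmf snd (D0 k n \<nu>)) {X. pout P X}) / n"
    unfolding prob_out_true_simulate[OF n] by (intro divide_right_mono sum_mono each) auto
  also have "\<dots> = 2 * measure_pmf.prob (map_pmf snd (D0 k n \<nu>)) {X. pout P X}"
    using n by simp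
  finally show ?thesis .
qed

lemma prob_out_true_simulate_ones:
  "n \<ge> 1 \<Longrightarrow> speakers_ok k P \<Longrightarrow>
    prob_out_true k (public_coins n \<nu>) (private_coins n) (simulate n P) (\<lambda>_. True)
    = measure_pmf.prob (D1 k n \<nu>) {X. pout P X}"
  by (simp add: prob_out_true_simulate prob_accept_D1)

lemma L_info_eq_sum_AND_info:
  assumes n: "n \<ge> 1" and pos: "\<forall>i<k. pmf \<nu> i > 0"
  shows "L_info k n \<nu> P = (\<Sum>i<k. AND_info k (public_coins n \<nu>) (private_coins n) (simulate n P) i)"
proof -
  let ?E = "\<lambda>i j. measure_pmf.expectation (owners n \<nu>) (\<lambda>W. mutual_info (coord_transcript n P i j W))"
  have cancel: "(1 / pmf \<nu> i) * (\<Sum>j<n. pmf \<nu> i * ?E i j) = (\<Sum>j<n. ?E i j)" if "i < k" for i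
  proof -
    have "pmf \<nu> i \<noteq> 0" using pos that by auto
    then show ?thesis by (simp add: sum_distrib_left[symmetric])
  qed
  have "L_info k n \<nu> P = (\<Sum>i<k. (1 / pmf \<nu> i) * (\<Sum>j<n. pmf \<nu> i * ?E i j)) / n"
    unfolding L_info_def by (simp add: cond_mi_D0_coordinate)
  also have "\<dots> = (\<Sum>i<k. (\<Sum>j<n. ?E i j) / n)"
    unfolding sum_divide_distrib[symmetric] by (intro arg_cong2[where f = "(/)"] sum.cong refl cancel) auto
  also have "\<dots> = (\<Sum>i<k. AND_info k (public_coins n \<nu>) (private_coins n) (simulate n P) i)"
    by (simp add: AND_info_simulate[OF n])
  finally show ?thesis .
qed

end

theorem mainTheorem5:
  fixes n k :: nat and \<nu> :: "nat pmf" and Pi_prot :: "(nat \<Rightarrow> bool) proto"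
  assumes "n \<ge> 1" and "k \<ge> 2"
    and "set_pmf \<nu> \<subseteq> {..<k}" and "\<forall>i<k. pmf \<nu> i > 0"
    and "speakers_ok k Pi_prot"
    and "err_Dnu k n \<nu> Pi_prot \<le> 2 / 100"
  shows "\<exists>(Lam :: (bool \<times> nat \<times> nat) proto) (\<rho> :: nat pmf) (\<sigma> :: nat \<Rightarrow> nat pmf).
           speakers_ok k Lam \<and> finite (set_pmf \<rho>) \<and> (\<forall>i<k. finite (set_pmf (\<sigma> i))) \<and>
           prob_out_true k \<rho> \<sigma> Lam (\<lambda>_. False) \<le> 8 / 100 \<and>
           1 - prob_out_true k \<rho> \<sigma> Lam (\<lambda>_. True) \<le> 8 / 100 \<and>
           L_info k n \<nu> Pi_prot = (\<Sum>i<k. AND_info k \<rho> \<sigma> Lam i)"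
proof -
  note n = assms(1) and set_\<nu> = assms(3)
  define p0 where "p0 = measure_pmf.prob (map_pmf snd (D0 k n \<nu>)) {X. pout Pi_prot X}"
  define p1 where "p1 = measure_pmf.prob (D1 k n \<nu>) {X. pout Pi_prot X}"
  let ?Lam = "simulate n Pi_prot" and ?\<rho> = "public_coins n \<nu>" and ?\<sigma> = "private_coins n"
  have "err_Dnu k n \<nu> Pi_prot = (1 - p1) / 2 + p0 / 2"
    unfolding p0_def p1_def by (rule err_Dnu_eq[OF set_\<nu> n])
  moreover have "p0 \<ge> 0" "p1 \<le> 1"
    unfolding p0_def p1_def by simp_all
  ultimately have "2 * p0 \<le> 8 / 100" "1 - p1 \<le> 8 / 100"
    using assms(6) by (simp_all add: field_simps)
  moreover have "prob_out_true k ?\<rho> ?\<sigma> ?Lam (\<lambda>_. False) \<le> 2 * p0"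
    unfolding p0_def by (rule prob_out_true_simulate_zeros[OF set_\<nu> n])
  moreover have "prob_out_true k ?\<rho> ?\<sigma> ?Lam (\<lambda>_. True) = p1"
    unfolding p1_def by (rule prob_out_true_simulate_ones[OF set_\<nu> n assms(5)])
  ultimately have errors: "prob_out_true k ?\<rho> ?\<sigma> ?Lam (\<lambda>_. False) \<le> 8 / 100"
      "1 - prob_out_true k ?\<rho> ?\<sigma> ?Lam (\<lambda>_. True) \<le> 8 / 100"
    by simp_all
  have "finite (set_pmf (?\<sigma> i))" for i
    unfolding private_coins_def by (simp add: finite_set_unif_bits)
  then show ?thesis
    using errors speakers_ok_simulate assms(5) finite_set_public_coins[OF set_\<nu> n]
      L_info_eq_sum_AND_info[OF set_\<nu> n assms(4)]
    by blast
qed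

end
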